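(* Let $(\Omega,\mathcal F,\mu)$ be a measure space and $p\in[1,\infty)$. If $\mathscr A\subset L^p(\Omega,\mathcal F,\mu)$ is uniformly integrable, then $\mathscr A$ is uniformly approximable.
   Context: All measures are assumed not identically zero. $\mathscr A\subset L^p$ is uniformly integrable if $\inf_{g\in L^p_+}\sup_{f\in\mathscr A}\int_{\{|f|>g\}}|f|^p\,d\mu=0$, where $L^p_+$ is the set of nonnegative functions in $L^p$. $\mathscr G_{p,k}$ is the set of functions $\sum_{i=1}^l a_i\mathbf 1_{A_i}\in L^p$ with $l\le k$, $\{A_i\}$ a measurable partition of $\Omega$, $a_i\in\mathbb R$. $N_{p,\varepsilon}(\mathscr A)=\inf\{k\ge1:\ \forall f\in\mathscr A\ \exists h\in\mathscr G_{p,k},\ \|f-h\|_p\le\varepsilon\}$ ($\inf\emptyset=\infty$); $\mathscr A$ is uniformly approximable if $N_{p,\varepsilon}(\mathscr A)<\infty$ for every $\varepsilon>0$. *)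

theory Defs
  imports "HOL-Analysis.Analysis"
begin

definition Lp :: "'a measure \<Rightarrow> real \<Rightarrow> ('a \<Rightarrow> real) set" where
  "Lp M p = {f \<in> borel_measurable M. integrable M (\<lambda>x. \<bar>f x\<bar> powr p)}"

definition Lp_plus :: "'a measure \<Rightarrow> real \<Rightarrow> ('a \<Rightarrow> real) set" where
  "Lp_plus M p = {g \<in> Lp M p. \<forall>x\<in>space M. 0 \<le> g x}"

definition Lp_norm :: "'a measure \<Rightarrow> real \<Rightarrow> ('a \<Rightarrow> real) \<Rightarrow> real" where
  "Lp_norm M p f = (\<integral>x. \<bar>f x\<bar> powr p \<partial>M) powr (1 / p)"

definition unif_integrable :: "'a measure \<Rightarrow> real \<Rightarrow> ('a \<Rightarrow> real) set \<Rightarrow> bool" where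
  "unif_integrable M p A \<longleftrightarrow>
     (INF g\<in>Lp_plus M p. SUP f\<in>A.
        (\<integral>\<^sup>+ x\<in>{x\<in>space M. \<bar>f x\<bar> > g x}. ennreal (\<bar>f x\<bar> powr p) \<partial>M)) = 0"

definition step_fun_set :: "'a measure \<Rightarrow> real \<Rightarrow> nat \<Rightarrow> ('a \<Rightarrow> real) set" where
  "step_fun_set M p k = {h \<in> Lp M p. \<exists>l \<le> k. \<exists>(S :: nat \<Rightarrow> 'a set) (a :: nat \<Rightarrow> real).
      (\<forall>i<l. S i \<in> sets M) \<and> disjoint_family_on S {..<l} \<and> (\<Union>i<l. S i) = space M \<and>
      (\<forall>x\<in>space M. h x = (\<Sum>i<l. a i * indicator (S i) x))}"

definition approx_number :: "'a measure \<Rightarrow> real \<Rightarrow> real \<Rightarrow> ('a \<Rightarrow> real) set \<Rightarrow> enat" where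
  "approx_number M p \<epsilon> A =
     Inf (enat ` {k. 1 \<le> k \<and> (\<forall>f\<in>A. \<exists>h\<in>step_fun_set M p k. Lp_norm M p (\<lambda>x. f x - h x) \<le> \<epsilon>)})"

definition unif_approximable :: "'a measure \<Rightarrow> real \<Rightarrow> ('a \<Rightarrow> real) set \<Rightarrow> bool" where
  "unif_approximable M p A \<longleftrightarrow> (\<forall>\<epsilon>>0. approx_number M p \<epsilon> A < \<infinity>)"

end

theory Submission
  imports Defs
begin

text \<open>Uniform integrability provides one \<open>g \<in> L\<^sup>p\<^sub>+\<close> with
  \<open>\<integral>\<^bsub>{|f| > g}\<^esub> |f|\<^sup>p\<close> small for every \<open>f \<in> A\<close>; approximate \<open>g\<close> in \<open>L\<^sup>p\<close> by a
  simple function \<open>0 \<le> s \<le> 2g\<close>. For any \<open>f\<close>, clip \<open>f\<close> to \<open>[-s, s]\<close> and round it towards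
  zero to the grid \<open>(s/m)\<int>\<close>. The result \<open>h\<close> takes at most \<open>3 \<cdot> |range s| \<cdot> (m + 1)\<close>
  values, a bound independent of \<open>f\<close>, and pointwise \<open>|f - h| \<le> 2|f|\<close> where \<open>|f| > g\<close>,
  \<open>|f - h| \<le> |g - s| + s/m\<close> elsewhere. Hence
  \<open>\<parallel>f - h\<parallel>\<^sub>p\<^sup>p \<le> 2\<^sup>p (\<integral>\<^bsub>{|f| > g}\<^esub> |f|\<^sup>p + \<parallel>g - s\<parallel>\<^sub>p\<^sup>p + \<parallel>s\<parallel>\<^sub>p\<^sup>p / m\<^sup>p)\<close>,
  which is small uniformly in \<open>f \<in> A\<close> once \<open>m\<close> is large.\<close>

lemma powr_add_le_two_powr:
  fixes a b p :: real
  assumes "0 \<le> a" "0 \<le> b" "0 \<le> p"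
  shows "(a + b) powr p \<le> 2 powr p * (a powr p + b powr p)"
proof -
  have "(a + b) powr p \<le> (2 * max a b) powr p"
    using assms by (intro powr_mono2) auto
  also have "\<dots> = 2 powr p * max a b powr p"
    using assms by (simp add: powr_mult)
  also have "\<dots> \<le> 2 powr p * (a powr p + b powr p)"
    by (intro mult_left_mono) (auto simp: max_def)
  finally show ?thesis .
qed

definition clip :: "real \<Rightarrow> real \<Rightarrow> real" where
  "clip c t = max (- c) (min c t)"

definition quantize :: "real \<Rightarrow> nat \<Rightarrow> real \<Rightarrow> real" where
  "quantize c m t = sgn t * (c / m) * \<lfloor>\<bar>t\<bar> / (c / m)\<rfloor>"

lemma abs_clip_le: "0 \<le> c \<Longrightarrow> \<bar>clip c t\<bar> \<le> min c \<bar>t\<bar>"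
  by (auto simp: clip_def)

lemma abs_diff_clip_le: "\<bar>t\<bar> \<le> u \<Longrightarrow> \<bar>t - clip c t\<bar> \<le> \<bar>u - c\<bar>"
  by (auto simp: clip_def)

lemma quantize_abs_le_and_error:
  assumes "0 \<le> c" "\<bar>t\<bar> \<le> c" "1 \<le> m"
  shows abs_quantize_le: "\<bar>quantize c m t\<bar> \<le> \<bar>t\<bar>"
    and abs_diff_quantize_le: "\<bar>t - quantize c m t\<bar> \<le> c / m"
proof -
  define d where "d = c / m"
  define n where "n = \<lfloor>\<bar>t\<bar> / d\<rfloor>"
  have "0 \<le> d * n \<and> d * n \<le> \<bar>t\<bar> \<and> \<bar>t\<bar> - d * n \<le> d"
  proof (cases "d = 0")
    case True
    then show ?thesis using assms by (auto simp: d_def)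
  next
    case False
    then have "0 < d" using assms by (simp add: d_def)
    then show ?thesis
      using floor_divide_lower[of d "\<bar>t\<bar>"] floor_divide_upper[of d "\<bar>t\<bar>"]
      by (auto simp: n_def algebra_simps)
  qed
  moreover have "quantize c m t = sgn t * (d * n)"
    by (simp add: quantize_def d_def n_def)
  ultimately show "\<bar>quantize c m t\<bar> \<le> \<bar>t\<bar>" "\<bar>t - quantize c m t\<bar> \<le> c / m"
    by (auto simp: sgn_real_def abs_if d_def)
qed

lemma quantize_in_grid:
  assumes "0 \<le> c" "\<bar>t\<bar> \<le> c" "1 \<le> m"
  shows "\<exists>\<sigma>\<in>{-1, 0, 1}. \<exists>n\<in>{0..int m}. quantize c m t = \<sigma> * (c / m) * n"
proof -
  have "\<bar>t\<bar> / (c / m) \<le> m"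
    using assms by (cases "c = 0") (auto simp: field_simps)
  then have "\<lfloor>\<bar>t\<bar> / (c / m)\<rfloor> \<in> {0..int m}"
    using assms by (auto simp: floor_le_iff)
  moreover have "sgn t \<in> {-1, 0, 1}"
    by (auto simp: sgn_real_def)
  ultimately show ?thesis
    unfolding quantize_def by blast
qed

lemma abs_diff_quantize_clip_powr_le:
  fixes t u c p :: real
  assumes c: "0 \<le> c" and m: "1 \<le> m" and p: "0 \<le> p"
  shows "\<bar>t - quantize c m (clip c t)\<bar> powr p
    \<le> 2 powr p * ((if u < \<bar>t\<bar> then \<bar>t\<bar> powr p else 0) + \<bar>u - c\<bar> powr p + (c / m) powr p)"
proof -
  define q where "q = quantize c m (clip c t)"
  have clip_le: "\<bar>clip c t\<bar> \<le> c" "\<bar>clip c t\<bar> \<le> \<bar>t\<bar>"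
    using abs_clip_le[OF c] by auto
  have q_le: "\<bar>q\<bar> \<le> \<bar>t\<bar>"
    using abs_quantize_le[OF c clip_le(1) m] clip_le(2) by (simp add: q_def)
  have q_err: "\<bar>clip c t - q\<bar> \<le> c / m"
    using abs_diff_quantize_le[OF c clip_le(1) m] by (simp add: q_def)
  have rest: "0 \<le> \<bar>u - c\<bar> powr p + (c / m) powr p"
    by simp
  show ?thesis
  proof (cases "u < \<bar>t\<bar>")
    case True
    have "\<bar>t - q\<bar> powr p \<le> (2 * \<bar>t\<bar>) powr p"
      using q_le p by (intro powr_mono2) auto
    also have "\<dots> = 2 powr p * \<bar>t\<bar> powr p"
      by (simp add: powr_mult)
    also have "\<dots> \<le> 2 powr p * (\<bar>t\<bar> powr p + \<bar>u - c\<bar> powr p + (c / m) powr p)"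
      using rest by (intro mult_left_mono) auto
    finally show ?thesis
      using True by (simp add: q_def)
  next
    case False
    have "\<bar>t - q\<bar> \<le> \<bar>u - c\<bar> + c / m"
      using abs_diff_clip_le[of t u c] False q_err by linarith
    then have "\<bar>t - q\<bar> powr p \<le> (\<bar>u - c\<bar> + c / m) powr p"
      using p by (intro powr_mono2) auto
    also have "\<dots> \<le> 2 powr p * (\<bar>u - c\<bar> powr p + (c / m) powr p)"
      using c p by (intro powr_add_le_two_powr) auto
    finally show ?thesis
      using False by (simp add: q_def)
  qed
qed

lemma integrable_abs_powr_dominated:
  fixes f g :: "'a \<Rightarrow> real"
  assumes "integrable M (\<lambda>x. \<bar>g x\<bar> powr p)" "f \<in> borel_measurable M" "0 \<le> p" "0 \<le> c"
    and "\<And>x. x \<in> space M \<Longrightarrow> \<bar>f x\<bar> \<le> c * \<bar>g x\<bar>"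
  shows "integrable M (\<lambda>x. \<bar>f x\<bar> powr p)"
proof (rule Bochner_Integration.integrable_bound)
  show "integrable M (\<lambda>x. c powr p * \<bar>g x\<bar> powr p)"
    using assms(1) by simp
  show "AE x in M. norm (\<bar>f x\<bar> powr p) \<le> norm (c powr p * \<bar>g x\<bar> powr p)"
  proof (rule AE_I2)
    fix x assume "x \<in> space M"
    then have "\<bar>f x\<bar> powr p \<le> (c * \<bar>g x\<bar>) powr p"
      using assms by (intro powr_mono2) auto
    then show "norm (\<bar>f x\<bar> powr p) \<le> norm (c powr p * \<bar>g x\<bar> powr p)"
      using assms(4) by (simp add: powr_mult)
  qed
qed (use assms(2) in measurable)

lemma finite_range_in_step_fun_set:
  assumes h: "h \<in> Lp M p" and fin: "finite (h ` space M)" and k: "card (h ` space M) \<le> k"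
  shows "h \<in> step_fun_set M p k"
proof -
  have [measurable]: "h \<in> borel_measurable M"
    using h by (simp add: Lp_def)
  define l where "l = card (h ` space M)"
  obtain e where e: "bij_betw e {..<l} (h ` space M)"
    using ex_bij_betw_nat_finite[OF fin] by (auto simp: l_def atLeast0LessThan)
  define S where "S i = {x \<in> space M. h x = e i}" for i
  have S_sets: "\<forall>i<l. S i \<in> sets M"
    unfolding S_def by measurable
  have S_disj: "disjoint_family_on S {..<l}"
    using e unfolding disjoint_family_on_def S_def bij_betw_def inj_on_def by auto
  have S_cover: "(\<Union>i<l. S i) = space M"
    using e unfolding S_def bij_betw_def by force
  have h_eq: "h x = (\<Sum>i<l. e i * indicator (S i) x)" if x: "x \<in> space M" for x
  proof -
    have "(\<Sum>i<l. e i * indicator (S i) x) = (\<Sum>i<l. (\<lambda>y. if y = h x then y else 0) (e i))"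
      using x by (intro sum.cong) (auto simp: S_def indicator_def)
    also have "\<dots> = (\<Sum>y\<in>h ` space M. if y = h x then y else 0)"
      using e by (rule sum.reindex_bij_betw)
    also have "\<dots> = h x"
      using x fin by simp
    finally show ?thesis ..
  qed
  have "l \<le> k"
    using k by (simp add: l_def)
  then show ?thesis
    unfolding step_fun_set_def using h S_sets S_disj S_cover h_eq by blast
qed

lemma quantize_clip_in_step_fun_set:
  fixes s f :: "'a \<Rightarrow> real"
  assumes s: "simple_function M s" and s_nonneg: "\<And>x. x \<in> space M \<Longrightarrow> 0 \<le> s x"
    and s_int: "integrable M (\<lambda>x. \<bar>s x\<bar> powr p)" and f: "f \<in> borel_measurable M"
    and m: "1 \<le> m" and p: "0 \<le> p" and k: "3 * card (s ` space M) * (m + 1) \<le> k"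
  shows "(\<lambda>x. quantize (s x) m (clip (s x) (f x))) \<in> step_fun_set M p k"
proof (rule finite_range_in_step_fun_set)
  define h where "h x = quantize (s x) m (clip (s x) (f x))" for x
  define V where "V = s ` space M"
  define G where "G = (\<lambda>(\<sigma>, c, n). \<sigma> * (c / m) * n) ` ({-1, 0, 1} \<times> V \<times> {0..int m})"
  have [measurable]: "s \<in> borel_measurable M"
    using s by (rule borel_measurable_simple_function)
  have clip_le: "\<bar>clip (s x) (f x)\<bar> \<le> s x" if "x \<in> space M" for x
    using abs_clip_le[OF s_nonneg[OF that]] by simp
  have "h \<in> borel_measurable M"
    using f unfolding h_def quantize_def clip_def by measurable
  moreover have "integrable M (\<lambda>x. \<bar>h x\<bar> powr p)"
  proof (rule integrable_abs_powr_dominated[OF s_int \<open>h \<in> borel_measurable M\<close> p])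
    show "\<bar>h x\<bar> \<le> 1 * \<bar>s x\<bar>" if "x \<in> space M" for x
      using abs_quantize_le[OF s_nonneg[OF that] clip_le[OF that] m] clip_le[OF that]
      by (simp add: h_def)
  qed simp
  ultimately show "h \<in> Lp M p"
    by (simp add: Lp_def)
  have finV: "finite V"
    using s by (simp add: simple_function_def V_def)
  have h_grid: "h ` space M \<subseteq> G"
  proof
    fix y assume "y \<in> h ` space M"
    then obtain x where x: "x \<in> space M" and y: "y = h x" by blast
    obtain \<sigma> n where "\<sigma> \<in> {-1, 0, 1}" "n \<in> {0..int m}" "h x = \<sigma> * (s x / m) * n"
      using quantize_in_grid[OF s_nonneg[OF x] clip_le[OF x] m] unfolding h_def by blast
    moreover have "s x \<in> V"
      using x by (simp add: V_def)
    ultimately show "y \<in> G"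
      unfolding y G_def by (intro image_eqI[where x="(\<sigma>, s x, n)"]) auto
  qed
  have finG: "finite G"
    using finV by (simp add: G_def)
  have "card G \<le> 3 * card V * (m + 1)"
  proof -
    have "card G \<le> card ({-1::real, 0, 1} \<times> V \<times> {0..int m})"
      unfolding G_def by (rule card_image_le) (use finV in simp)
    also have "\<dots> = 3 * card V * (m + 1)"
      using finV by (simp add: card_cartesian_product nat_add_distrib algebra_simps)
    finally show ?thesis .
  qed
  then show "card (h ` space M) \<le> k"
    using k card_mono[OF finG h_grid] by (simp add: V_def)
  show "finite (h ` space M)"
    using finG h_grid by (rule finite_subset[rotated])
qed

lemma Lp_plus_simple_approx:
  fixes g :: "'a \<Rightarrow> real"
  assumes g: "g \<in> Lp_plus M p" and p: "0 < p" and \<delta>: "0 < \<delta>"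
  obtains s where "simple_function M s" "\<And>x. x \<in> space M \<Longrightarrow> 0 \<le> s x \<and> s x \<le> 2 * g x"
    "(\<integral>x. \<bar>g x - s x\<bar> powr p \<partial>M) < \<delta>"
proof -
  have [measurable]: "g \<in> borel_measurable M" and g_int: "integrable M (\<lambda>x. \<bar>g x\<bar> powr p)"
    and g_nonneg: "\<And>x. x \<in> space M \<Longrightarrow> 0 \<le> g x"
    using g by (auto simp: Lp_plus_def Lp_def)
  obtain F where F: "\<And>i. simple_function M (F i)"
    and F_lim: "\<And>x. x \<in> space M \<Longrightarrow> (\<lambda>i. F i x) \<longlonglongrightarrow> g x"
    and F_bound: "\<And>i x. x \<in> space M \<Longrightarrow> \<bar>F i x\<bar> \<le> 2 * \<bar>g x\<bar>"
    using borel_measurable_implies_sequence_metric[of g M 0] by (auto simp: dist_real_def; blast)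
  define s where "s i x = \<bar>F i x\<bar>" for i x
  have s_simple: "simple_function M (s i)" for i
    unfolding s_def using simple_function_compose1[OF F[of i], of abs] by simp
  have s_bound: "0 \<le> s i x \<and> s i x \<le> 2 * g x" if "x \<in> space M" for i x
    using F_bound[OF that, of i] g_nonneg[OF that] by (simp add: s_def)
  have "(\<lambda>i. \<integral>x. \<bar>g x - s i x\<bar> powr p \<partial>M) \<longlonglongrightarrow> (\<integral>x. 0 \<partial>M)"
  proof (rule integral_dominated_convergence[where w="\<lambda>x. \<bar>g x\<bar> powr p"])
    show "(\<lambda>x. \<bar>g x - s i x\<bar> powr p) \<in> borel_measurable M" for i
      using borel_measurable_simple_function[OF s_simple[of i]] by measurable
    show "AE x in M. (\<lambda>i. \<bar>g x - s i x\<bar> powr p) \<longlonglongrightarrow> 0"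
    proof (rule AE_I2)
      fix x assume x: "x \<in> space M"
      have "(\<lambda>i. s i x) \<longlonglongrightarrow> g x"
        using tendsto_rabs[OF F_lim[OF x]] g_nonneg[OF x] by (simp add: s_def)
      then have "(\<lambda>i. \<bar>g x - s i x\<bar>) \<longlonglongrightarrow> 0"
        using tendsto_diff[OF tendsto_const[of "g x"]] tendsto_rabs_zero by fastforce
      then show "(\<lambda>i. \<bar>g x - s i x\<bar> powr p) \<longlonglongrightarrow> 0"
        using p by (intro tendsto_zero_powrI[where b=p]) auto
    qed
    show "AE x in M. norm (\<bar>g x - s i x\<bar> powr p) \<le> \<bar>g x\<bar> powr p" for i
    proof (rule AE_I2)
      fix x assume "x \<in> space M"
      then have "\<bar>g x - s i x\<bar> \<le> \<bar>g x\<bar>"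
        using s_bound[of x i] by auto
      then show "norm (\<bar>g x - s i x\<bar> powr p) \<le> \<bar>g x\<bar> powr p"
        using p by (simp add: powr_mono2)
    qed
  qed (use g_int in auto)
  then have "eventually (\<lambda>i. (\<integral>x. \<bar>g x - s i x\<bar> powr p \<partial>M) < \<delta>) sequentially"
    using \<delta> by (intro order_tendstoD) auto
  then obtain i where "(\<integral>x. \<bar>g x - s i x\<bar> powr p \<partial>M) < \<delta>"
    using eventually_sequentially by auto
  then show ?thesis
    using that s_simple s_bound by blast
qed

definition tail_powr :: "real \<Rightarrow> ('a \<Rightarrow> real) \<Rightarrow> ('a \<Rightarrow> real) \<Rightarrow> 'a \<Rightarrow> real" where
  "tail_powr p g f x = (if g x < \<bar>f x\<bar> then \<bar>f x\<bar> powr p else 0)"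

lemma integral_quantize_clip_error_le:
  fixes f g s :: "'a \<Rightarrow> real" and m :: nat
  assumes tail_int: "integrable M (tail_powr p g f)"
    and gs_int: "integrable M (\<lambda>x. \<bar>g x - s x\<bar> powr p)"
    and s_int: "integrable M (\<lambda>x. \<bar>s x\<bar> powr p)"
    and s_nonneg: "\<And>x. x \<in> space M \<Longrightarrow> 0 \<le> s x" and m: "1 \<le> m" and p: "0 \<le> p"
  shows "(\<integral>x. \<bar>f x - quantize (s x) m (clip (s x) (f x))\<bar> powr p \<partial>M)
    \<le> 2 powr p * ((\<integral>x. tail_powr p g f x \<partial>M)
        + (\<integral>x. \<bar>g x - s x\<bar> powr p \<partial>M) + (\<integral>x. \<bar>s x\<bar> powr p \<partial>M) / m powr p)"
proof -
  define W where
    "W x = 2 powr p * (tail_powr p g f x + \<bar>g x - s x\<bar> powr p + \<bar>s x\<bar> powr p / m powr p)" for x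
  have "(\<integral>x. \<bar>f x - quantize (s x) m (clip (s x) (f x))\<bar> powr p \<partial>M) \<le> (\<integral>x. W x \<partial>M)"
  proof (rule integral_mono_AE')
    show "integrable M W"
      unfolding W_def using tail_int gs_int s_int by auto
    show "AE x in M. \<bar>f x - quantize (s x) m (clip (s x) (f x))\<bar> powr p \<le> W x"
    proof (rule AE_I2)
      fix x assume "x \<in> space M"
      then have "(s x / m) powr p = \<bar>s x\<bar> powr p / m powr p"
        using s_nonneg by (simp add: powr_divide)
      then show "\<bar>f x - quantize (s x) m (clip (s x) (f x))\<bar> powr p \<le> W x"
        using abs_diff_quantize_clip_powr_le[OF s_nonneg[OF \<open>x \<in> space M\<close>] m p, of "f x" "g x"]
        by (simp add: W_def tail_powr_def)
    qed
    show "AE x in M. 0 \<le> W x"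
      by (simp add: W_def tail_powr_def)
  qed
  also have "\<dots> = 2 powr p * ((\<integral>x. tail_powr p g f x \<partial>M)
        + (\<integral>x. \<bar>g x - s x\<bar> powr p \<partial>M) + (\<integral>x. \<bar>s x\<bar> powr p \<partial>M) / m powr p)"
    unfolding W_def using tail_int gs_int s_int by simp
  finally show ?thesis .
qed

lemma Lp_norm_le:
  assumes "0 < p" "0 \<le> \<epsilon>" "(\<integral>x. \<bar>f x\<bar> powr p \<partial>M) \<le> \<epsilon> powr p"
  shows "Lp_norm M p f \<le> \<epsilon>"
proof -
  have "Lp_norm M p f \<le> (\<epsilon> powr p) powr (1 / p)"
    unfolding Lp_norm_def using assms by (intro powr_mono2) (auto intro: integral_nonneg_AE)
  also have "\<dots> = \<epsilon>"
    using assms by (simp add: powr_powr)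
  finally show ?thesis .
qed

lemma ex_nat_powr_ge:
  fixes x p :: real
  assumes "0 \<le> x" "0 < p"
  shows "\<exists>m::nat. m \<ge> 1 \<and> x \<le> real m powr p"
proof -
  define m where "m = nat \<lceil>x powr (1 / p)\<rceil> + 1"
  have "x = (x powr (1 / p)) powr p"
    using assms by (simp add: powr_powr)
  also have "\<dots> \<le> m powr p"
  proof (rule powr_mono2)
    show "x powr (1 / p) \<le> m"
      by (simp add: m_def) (smt (verit) le_of_int_ceiling)
  qed (use assms in auto)
  finally show ?thesis
    by (intro exI[of _ m]) (simp add: m_def)
qed

lemma Lp_plus_uniform_step_approx:
  fixes g :: "'a \<Rightarrow> real"
  assumes g: "g \<in> Lp_plus M p" and p: "0 < p" and \<epsilon>: "0 < \<epsilon>"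
  obtains k where "1 \<le> k"
    "\<And>f. f \<in> borel_measurable M \<Longrightarrow> integrable M (tail_powr p g f) \<Longrightarrow>
      (\<integral>x. tail_powr p g f x \<partial>M) < \<epsilon> powr p / (3 * 2 powr p) \<Longrightarrow>
      \<exists>h\<in>step_fun_set M p k. Lp_norm M p (\<lambda>x. f x - h x) \<le> \<epsilon>"
proof -
  define \<delta> where "\<delta> = \<epsilon> powr p / (3 * 2 powr p)"
  have \<delta>: "0 < \<delta>"
    using \<epsilon> by (simp add: \<delta>_def)
  have [measurable]: "g \<in> borel_measurable M" and g_int: "integrable M (\<lambda>x. \<bar>g x\<bar> powr p)"
    using g by (auto simp: Lp_plus_def Lp_def)
  obtain s where s: "simple_function M s"
    and s_bound: "\<And>x. x \<in> space M \<Longrightarrow> 0 \<le> s x \<and> s x \<le> 2 * g x"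
    and gs_small: "(\<integral>x. \<bar>g x - s x\<bar> powr p \<partial>M) < \<delta>"
    using Lp_plus_simple_approx[OF g p \<delta>] by blast
  have [measurable]: "s \<in> borel_measurable M"
    using s by (rule borel_measurable_simple_function)
  have s_int: "integrable M (\<lambda>x. \<bar>s x\<bar> powr p)"
    by (rule integrable_abs_powr_dominated[OF g_int, of _ 2]) (use p in \<open>auto dest: s_bound\<close>)
  have gs_int: "integrable M (\<lambda>x. \<bar>g x - s x\<bar> powr p)"
    by (rule integrable_abs_powr_dominated[OF g_int, of _ 1]) (use p in \<open>auto dest: s_bound\<close>)
  define I where "I = (\<integral>x. \<bar>s x\<bar> powr p \<partial>M)"
  obtain m :: nat where m: "1 \<le> m" and "I / \<delta> \<le> m powr p"
    using ex_nat_powr_ge[of "I / \<delta>" p] \<delta> p by (auto simp: I_def)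
  then have I_small: "I / m powr p \<le> \<delta>"
    using \<delta> by (simp add: field_simps)
  define k where "k = 3 * card (s ` space M) * (m + 1) + 1"
  show ?thesis
  proof (rule that[of k])
    fix f
    assume f: "f \<in> borel_measurable M" and tail_int: "integrable M (tail_powr p g f)"
      and tail_small: "(\<integral>x. tail_powr p g f x \<partial>M) < \<epsilon> powr p / (3 * 2 powr p)"
    define h where "h x = quantize (s x) m (clip (s x) (f x))" for x
    have "h \<in> step_fun_set M p k"
      unfolding h_def using s s_bound s_int f m p
      by (intro quantize_clip_in_step_fun_set) (auto simp: k_def)
    have "(\<integral>x. \<bar>f x - h x\<bar> powr p \<partial>M)
        \<le> 2 powr p * ((\<integral>x. tail_powr p g f x \<partial>M) + (\<integral>x. \<bar>g x - s x\<bar> powr p \<partial>M) + I / m powr p)"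
      unfolding h_def I_def using tail_int gs_int s_int s_bound m p
      by (intro integral_quantize_clip_error_le) auto
    also have "\<dots> \<le> 2 powr p * (3 * \<delta>)"
      using tail_small gs_small I_small by (intro mult_left_mono) (auto simp: \<delta>_def)
    also have "\<dots> = \<epsilon> powr p"
      by (simp add: \<delta>_def)
    finally have "(\<integral>x. \<bar>f x - h x\<bar> powr p \<partial>M) \<le> \<epsilon> powr p" .
    with \<open>h \<in> step_fun_set M p k\<close> show "\<exists>h\<in>step_fun_set M p k. Lp_norm M p (\<lambda>x. f x - h x) \<le> \<epsilon>"
      using p \<epsilon> by (intro bexI[of _ h] Lp_norm_le) auto
  qed (simp add: k_def)
qed

lemma approx_number_le:
  assumes "1 \<le> k" "\<forall>f\<in>A. \<exists>h\<in>step_fun_set M p k. Lp_norm M p (\<lambda>x. f x - h x) \<le> \<epsilon>"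
  shows "approx_number M p \<epsilon> A \<le> k"
  unfolding approx_number_def using assms by (intro Inf_lower) auto

lemma unif_integrableD:
  fixes A :: "('a \<Rightarrow> real) set"
  assumes UI: "unif_integrable M p A" and A: "A \<subseteq> Lp M p" and \<delta>: "0 < \<delta>"
  obtains g where "g \<in> Lp_plus M p"
    "\<And>f. f \<in> A \<Longrightarrow> integrable M (tail_powr p g f)"
    "\<And>f. f \<in> A \<Longrightarrow> (\<integral>x. tail_powr p g f x \<partial>M) < \<delta>"
proof -
  have "(INF g\<in>Lp_plus M p. SUP f\<in>A.
      \<integral>\<^sup>+ x\<in>{x\<in>space M. \<bar>f x\<bar> > g x}. ennreal (\<bar>f x\<bar> powr p) \<partial>M) < \<delta>"
    using UI \<delta> unfolding unif_integrable_def by simp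
  then obtain g where g: "g \<in> Lp_plus M p"
    and g_tail: "(SUP f\<in>A. \<integral>\<^sup>+ x\<in>{x\<in>space M. \<bar>f x\<bar> > g x}. ennreal (\<bar>f x\<bar> powr p) \<partial>M) < \<delta>"
    unfolding INF_less_iff by blast
  have [measurable]: "g \<in> borel_measurable M"
    using g by (simp add: Lp_plus_def Lp_def)
  have tail_int: "integrable M (tail_powr p g f)" if "f \<in> A" for f
  proof -
    have [measurable]: "f \<in> borel_measurable M" and f_int: "integrable M (\<lambda>x. \<bar>f x\<bar> powr p)"
      using A that by (auto simp: Lp_def)
    show ?thesis
      unfolding tail_powr_def
      by (rule Bochner_Integration.integrable_bound[OF f_int]) (auto intro: AE_I2)
  qed
  have "(\<integral>x. tail_powr p g f x \<partial>M) < \<delta>" if f: "f \<in> A" for f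
  proof -
    have tail_nonneg: "0 \<le> (\<integral>x. tail_powr p g f x \<partial>M)"
      by (rule integral_nonneg_AE) (simp add: tail_powr_def)
    have "ennreal (\<integral>x. tail_powr p g f x \<partial>M)
        = (\<integral>\<^sup>+ x. ennreal (tail_powr p g f x) \<partial>M)"
      by (rule nn_integral_eq_integral[symmetric, OF tail_int[OF f]]) (simp add: tail_powr_def)
    also have "\<dots> = (\<integral>\<^sup>+ x\<in>{x\<in>space M. \<bar>f x\<bar> > g x}. ennreal (\<bar>f x\<bar> powr p) \<partial>M)"
      by (intro nn_integral_cong) (auto simp: tail_powr_def indicator_def)
    also have "\<dots> < \<delta>"
      using g_tail SUP_upper[OF f] by (rule le_less_trans[rotated])
    finally show ?thesis
      using \<delta> tail_nonneg by (simp add: ennreal_less_iff)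
  qed
  then show ?thesis
    using that g tail_int by blast
qed

theorem proposition4p1:
  fixes M :: "'a measure" and p :: real and A :: "('a \<Rightarrow> real) set"
  assumes "emeasure M (space M) \<noteq> 0"
    and "1 \<le> p"
    and "A \<subseteq> Lp M p"
    and "unif_integrable M p A"
  shows "unif_approximable M p A"
  unfolding unif_approximable_def
proof (intro allI impI)
  fix \<epsilon> :: real
  assume \<epsilon>: "0 < \<epsilon>"
  have p: "0 < p"
    using assms(2) by simp
  obtain g where g: "g \<in> Lp_plus M p"
    and tail_int: "\<And>f. f \<in> A \<Longrightarrow> integrable M (tail_powr p g f)"
    and tail_small: "\<And>f. f \<in> A \<Longrightarrow> (\<integral>x. tail_powr p g f x \<partial>M) < \<epsilon> powr p / (3 * 2 powr p)"
    using unif_integrableD[OF assms(4,3), of "\<epsilon> powr p / (3 * 2 powr p)"] \<epsilon> by auto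
  obtain k where "1 \<le> k" and "\<And>f. f \<in> borel_measurable M \<Longrightarrow>
      integrable M (tail_powr p g f) \<Longrightarrow>
      (\<integral>x. tail_powr p g f x \<partial>M) < \<epsilon> powr p / (3 * 2 powr p) \<Longrightarrow>
      \<exists>h\<in>step_fun_set M p k. Lp_norm M p (\<lambda>x. f x - h x) \<le> \<epsilon>"
    using Lp_plus_uniform_step_approx[OF g p \<epsilon>] by blast
  then have "approx_number M p \<epsilon> A \<le> k"
    using tail_int tail_small assms(3) by (intro approx_number_le) (auto simp: Lp_def)
  then show "approx_number M p \<epsilon> A < \<infinity>"
    using enat_ord_simps(4) le_less_trans by blast
qed

end
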